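(* For every planar tree $t$, $\mathrm{GD}(t)=\mathrm{GD}(\iota(t))$.
   Context: A planar tree has linearly ordered children at each node, each node being a leaf or having $\ge2$ children (internal node); $\deg t$ = number of leaves minus one. For planar trees $s,r$, $s/r$ is the tree obtained by identifying the root of $s$ with the leftmost leaf of $r$. For $t$ of degree $n$, $\mathrm{GD}(t)=\{i\in\{1,\dots,n-1\}: t=s/r\text{ for some planar trees } s,r \text{ with }\deg s=i\}$. A generalized Stirling permutation (GSP) is a planar tree with a bijection $\kappa$ from its internal nodes to $\{1,\dots,N\}$ increasing from each internal node to its internal children. Its word $\mathbf w(u)=u_1\cdots u_n$: a leaf has empty word; a node $x$ with children $c_1,\dots,c_k$ has word $\mathbf w(c_1)\kappa(x)\mathbf w(c_2)\cdots\kappa(x)\mathbf w(c_k)$. $\mathrm{GD}(u)=\{i\in\{1,\dots,n-1\}: u_a>u_b \text{ for all } a\le i<b\}$. For each planar tree $t$ there is exactly one GSP with underlying tree $t$ whose word is $213$-avoiding (no $i<j<k$ with $w_k>w_i>w_j$); it is denoted $\iota(t)$. *)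

theory Defs
  imports Main
begin

datatype ptree = Leaf | Node "ptree list"

fun wf_ptree :: "ptree \<Rightarrow> bool" where
  "wf_ptree Leaf = True"
| "wf_ptree (Node cs) = (2 \<le> length cs \<and> (\<forall>c\<in>set cs. wf_ptree c))"

fun leaves :: "ptree \<Rightarrow> nat" where
  "leaves Leaf = 1"
| "leaves (Node cs) = sum_list (map leaves cs)"

definition deg :: "ptree \<Rightarrow> nat" where
  "deg t = leaves t - 1"

text \<open>Grafting: s / r identifies the root of s with the leftmost leaf of r.\<close>

fun graft :: "ptree \<Rightarrow> ptree \<Rightarrow> ptree" where
  "graft s Leaf = s"
| "graft s (Node []) = Node []"
| "graft s (Node (c # cs)) = Node (graft s c # cs)"

definition GD_tree :: "ptree \<Rightarrow> nat set" where
  "GD_tree t = {i \<in> {1..deg t - 1}. \<exists>s r. wf_ptree s \<and> wf_ptree r \<and> t = graft s r \<and> deg s = i}"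

datatype ltree = LLeaf | LNode nat "ltree list"

fun erase :: "ltree \<Rightarrow> ptree" where
  "erase LLeaf = Leaf"
| "erase (LNode k cs) = Node (map erase cs)"

fun labels :: "ltree \<Rightarrow> nat list" where
  "labels LLeaf = []"
| "labels (LNode k cs) = k # concat (map labels cs)"

fun increasing :: "ltree \<Rightarrow> bool" where
  "increasing LLeaf = True"
| "increasing (LNode k cs) =
     (\<forall>c\<in>set cs. increasing c \<and> (case c of LLeaf \<Rightarrow> True | LNode k' _ \<Rightarrow> k < k'))"

definition gsp :: "ltree \<Rightarrow> bool" where
  "gsp u \<longleftrightarrow> wf_ptree (erase u) \<and> distinct (labels u)
      \<and> set (labels u) = {1..length (labels u)} \<and> increasing u"

fun word :: "ltree \<Rightarrow> nat list" where
  "word LLeaf = []"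
| "word (LNode k []) = []"
| "word (LNode k (c # cs)) = word c @ concat (map (\<lambda>d. k # word d) cs)"

text \<open>Global descents of a word u_1...u_n (1-indexed; list index a-1).\<close>

definition GD_word :: "nat list \<Rightarrow> nat set" where
  "GD_word w = {i \<in> {1..length w - 1}.
      \<forall>a b. 1 \<le> a \<and> a \<le> i \<and> i < b \<and> b \<le> length w \<longrightarrow> w ! (a - 1) > w ! (b - 1)}"

definition avoids213 :: "nat list \<Rightarrow> bool" where
  "avoids213 w \<longleftrightarrow> \<not> (\<exists>i j k. i < j \<and> j < k \<and> k < length w \<and> w ! k > w ! i \<and> w ! i > w ! j)"

definition iota :: "ptree \<Rightarrow> ltree" where
  "iota t = (THE u. gsp u \<and> erase u = t \<and> avoids213 (word u))"

end

theory Submission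
  imports Defs
begin

text \<open>In a 213-avoiding increasing labelling, every label in a child subtree exceeds
  every label in the subtrees to its right: otherwise the parent label, which separates
  their words, completes a 213 pattern. So the word of a node with leftmost child \<open>c\<close> has
  the form \<open>w(c) k v\<close> with all of \<open>w(c)\<close> above \<open>k\<close> and above all of \<open>v\<close>, and its global
  descents are those of \<open>w(c)\<close> together with \<open>|w(c)|\<close>. The global descents of the tree obey
  the same recursion, because \<open>t = s/r\<close> with \<open>r\<close> not a leaf means precisely that \<open>s\<close> is
  grafted into the leftmost child. The same fact shows that reading the labels of such a
  GSP in reverse preorder gives \<open>1, \<dots>, N\<close>, which makes \<open>\<iota>(t)\<close> unique.\<close>

section \<open>Global descents and 213-avoidance of words\<close>

lemma ball_take_drop_iff:
  "(\<forall>e\<in>set (take i w). \<forall>f\<in>set (drop i w). P e f) \<longleftrightarrow>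
     (\<forall>p q. p < i \<and> i \<le> q \<and> q < length w \<longrightarrow> P (w ! p) (w ! q))"
proof
  assume H: "\<forall>e\<in>set (take i w). \<forall>f\<in>set (drop i w). P e f"
  show "\<forall>p q. p < i \<and> i \<le> q \<and> q < length w \<longrightarrow> P (w ! p) (w ! q)"
  proof (intro allI impI)
    fix p q assume pq: "p < i \<and> i \<le> q \<and> q < length w"
    then have "w ! p \<in> set (take i w)" by (auto simp: in_set_conv_nth)
    moreover have "w ! q \<in> set (drop i w)"
      using pq by (auto simp: in_set_conv_nth intro!: exI[of _ "q - i"])
    ultimately show "P (w ! p) (w ! q)" using H by blast
  qed
qed (fastforce simp: in_set_conv_nth)

lemma mem_GD_word_iff:
  "i \<in> GD_word w \<longleftrightarrow>
     0 < i \<and> i < length w \<and> (\<forall>e\<in>set (take i w). \<forall>f\<in>set (drop i w). f < e)"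
proof -
  have "(\<forall>a b. 1 \<le> a \<and> a \<le> i \<and> i < b \<and> b \<le> length w \<longrightarrow> w ! (a - 1) > w ! (b - 1))
      \<longleftrightarrow> (\<forall>p q. p < i \<and> i \<le> q \<and> q < length w \<longrightarrow> w ! q < w ! p)"
  proof
    assume H: "\<forall>a b. 1 \<le> a \<and> a \<le> i \<and> i < b \<and> b \<le> length w \<longrightarrow> w ! (a - 1) > w ! (b - 1)"
    show "\<forall>p q. p < i \<and> i \<le> q \<and> q < length w \<longrightarrow> w ! q < w ! p"
      using H[rule_format, of "Suc _" "Suc _"] by auto
  next
    assume H: "\<forall>p q. p < i \<and> i \<le> q \<and> q < length w \<longrightarrow> w ! q < w ! p"
    show "\<forall>a b. 1 \<le> a \<and> a \<le> i \<and> i < b \<and> b \<le> length w \<longrightarrow> w ! (a - 1) > w ! (b - 1)"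
    proof (intro allI impI)
      fix a b assume "1 \<le> a \<and> a \<le> i \<and> i < b \<and> b \<le> length w"
      then have "a - 1 < i \<and> i \<le> b - 1 \<and> b - 1 < length w" by auto
      then show "w ! (a - 1) > w ! (b - 1)" using H by blast
    qed
  qed
  then show ?thesis
    unfolding GD_word_def ball_take_drop_iff by auto
qed

lemma GD_word_append_Cons:
  assumes x_gt: "\<forall>e\<in>set x. m < e" and x_gt_y: "\<forall>e\<in>set x. \<forall>f\<in>set y. f < e"
    and y_ge: "\<forall>f\<in>set y. m \<le> f"
  shows "GD_word (x @ m # y) = GD_word x \<union> (if x = [] then {} else {length x})"
proof (intro set_eqI)
  fix i
  consider "i < length x" | "i = length x" | "length x < i" by linarith
  then show "i \<in> GD_word (x @ m # y) \<longleftrightarrow> i \<in> GD_word x \<union> (if x = [] then {} else {length x})"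
  proof cases
    case 1
    have "\<forall>e\<in>set (take i x). \<forall>f\<in>set (m # y). f < e"
      using x_gt x_gt_y set_take_subset by fastforce
    moreover have "take i (x @ m # y) = take i x"
      "set (drop i (x @ m # y)) = set (drop i x) \<union> set (m # y)" using 1 by auto
    ultimately show ?thesis
      using 1 by (simp only: Un_iff mem_GD_word_iff) auto
  next
    case 2
    then show ?thesis
      using x_gt x_gt_y by (simp only: Un_iff mem_GD_word_iff) auto
  next
    case 3
    then obtain j where i: "i = Suc (length x + j)" by (metis less_iff_Suc_add)
    have "\<not> (\<forall>e\<in>set (take i (x @ m # y)). \<forall>f\<in>set (drop i (x @ m # y)). f < e)"
      if "i < length (x @ m # y)"
    proof -
      have j: "j < length y" using that i by simp
      have "y ! j \<in> set (drop i (x @ m # y))"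
        using i j by (simp add: Cons_nth_drop_Suc[symmetric])
      moreover have "y ! j \<in> set y" using j by simp
      moreover have "m \<in> set (take i (x @ m # y))" using i by simp
      ultimately show ?thesis using y_ge leD by blast
    qed
    then show ?thesis
      using 3 by (simp only: Un_iff mem_GD_word_iff) auto
  qed
qed

lemma avoids213_Nil: "avoids213 []"
  by (simp add: avoids213_def)

lemma avoids213_appendD1:
  assumes "avoids213 (x @ y)"
  shows "avoids213 x"
  unfolding avoids213_def
proof clarify
  fix i j k assume "i < j" "j < k" "k < length x" "x ! i < x ! k" "x ! j < x ! i"
  then have "i < j \<and> j < k \<and> k < length (x @ y) \<and> (x @ y) ! i < (x @ y) ! k \<and> (x @ y) ! j < (x @ y) ! i"
    by (simp add: nth_append)
  then show False using assms unfolding avoids213_def by blast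
qed

lemma avoids213_appendD2:
  assumes "avoids213 (x @ y)"
  shows "avoids213 y"
  unfolding avoids213_def
proof clarify
  fix i j k assume "i < j" "j < k" "k < length y" "y ! i < y ! k" "y ! j < y ! i"
  then have "length x + i < length x + j \<and> length x + j < length x + k \<and> length x + k < length (x @ y)
      \<and> (x @ y) ! (length x + i) < (x @ y) ! (length x + k)
      \<and> (x @ y) ! (length x + j) < (x @ y) ! (length x + i)"
    by simp
  then show False using assms unfolding avoids213_def by blast
qed

lemma avoids213_append:
  assumes x: "avoids213 x" and y: "avoids213 y" and x_gt_y: "\<forall>e\<in>set x. \<forall>f\<in>set y. f < e"
  shows "avoids213 (x @ y)"
  unfolding avoids213_def
proof clarify
  fix i j k
  assume ijk: "i < j" "j < k" "k < length (x @ y)"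
    and pattern: "(x @ y) ! i < (x @ y) ! k" "(x @ y) ! j < (x @ y) ! i"
  consider "k < length x" | "length x \<le> i" | "i < length x" "length x \<le> k" by linarith
  then show False
  proof cases
    case 1
    then show False using x ijk pattern unfolding avoids213_def by (auto simp: nth_append)
  next
    case 2
    then have "i - length x < j - length x \<and> j - length x < k - length x \<and> k - length x < length y
        \<and> y ! (i - length x) < y ! (k - length x) \<and> y ! (j - length x) < y ! (i - length x)"
      using ijk pattern by (simp add: nth_append less_diff_conv2)
    then show False using y unfolding avoids213_def by blast
  next
    case 3
    then have "x ! i \<in> set x" "y ! (k - length x) \<in> set y" using ijk by auto
    then show False using x_gt_y 3 pattern by (fastforce simp: nth_append)
  qed
qed

lemma avoids213_Cons:
  assumes y: "avoids213 y" and y_ge: "\<forall>f\<in>set y. m \<le> f"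
  shows "avoids213 (m # y)"
  unfolding avoids213_def
proof clarify
  fix i j k
  assume ijk: "i < j" "j < k" "k < length (m # y)"
    and pattern: "(m # y) ! i < (m # y) ! k" "(m # y) ! j < (m # y) ! i"
  obtain j' k' where jk: "j = Suc j'" "k = Suc k'" using ijk by (metis less_imp_Suc_add)
  show False
  proof (cases i)
    case 0
    have "y ! j' \<in> set y" using ijk jk by simp
    then show False using y_ge pattern jk 0 by fastforce
  next
    case (Suc i')
    then show False using y ijk pattern jk unfolding avoids213_def by auto
  qed
qed

lemma avoids213_not_less:
  assumes "avoids213 (x @ m # y)" "e \<in> set x" "m < e" "f \<in> set y"
  shows "\<not> e < f"
proof
  assume "e < f"
  obtain p where p: "p < length x" "x ! p = e" using assms(2) by (meson in_set_conv_nth)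
  obtain q where q: "q < length y" "y ! q = f" using assms(4) by (meson in_set_conv_nth)
  have "p < length x \<and> length x < Suc (length x + q) \<and> Suc (length x + q) < length (x @ m # y)
      \<and> (x @ m # y) ! p < (x @ m # y) ! Suc (length x + q) \<and> (x @ m # y) ! length x < (x @ m # y) ! p"
    using p q \<open>e < f\<close> assms(3) by (simp add: nth_append)
  then show False using assms(1) unfolding avoids213_def by blast
qed

section \<open>Global descents of planar trees\<close>

lemma leaves_pos: "wf_ptree t \<Longrightarrow> 0 < leaves t"
proof (induction t)
  case (Node cs)
  then obtain c cs' where "cs = c # cs'" "0 < leaves c"
    by (cases cs) auto
  then show ?case by simp
qed simp

lemma deg_eq_0_iff: "wf_ptree t \<Longrightarrow> deg t = 0 \<longleftrightarrow> t = Leaf"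
proof (cases t)
  case (Node cs)
  assume "wf_ptree t"
  then obtain c d cs' where "cs = c # d # cs'" "wf_ptree c" "wf_ptree d"
    using Node by (auto simp: numeral_2_eq_2 Suc_le_length_iff)
  then show ?thesis
    using Node leaves_pos[of c] leaves_pos[of d] by (simp add: deg_def)
qed (simp add: deg_def)

lemma leaves_graft: "wf_ptree r \<Longrightarrow> leaves (graft s r) + 1 = leaves s + leaves r"
  by (induction s r rule: graft.induct) auto

lemma deg_graft: "wf_ptree s \<Longrightarrow> wf_ptree r \<Longrightarrow> deg (graft s r) = deg s + deg r"
  using leaves_graft[of r s] leaves_pos[of s] leaves_pos[of r] by (simp add: deg_def)

lemma Node_Cons_eq_graft_iff:
  "r \<noteq> Leaf \<Longrightarrow> Node (c # cs) = graft s r \<longleftrightarrow> (\<exists>d. r = Node (d # cs) \<and> c = graft s d)"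
  by (cases "(s, r)" rule: graft.cases) auto

lemma mem_GD_tree_iff:
  assumes "wf_ptree t"
  shows "i \<in> GD_tree t \<longleftrightarrow>
    0 < i \<and> (\<exists>s r. wf_ptree s \<and> wf_ptree r \<and> r \<noteq> Leaf \<and> t = graft s r \<and> deg s = i)"
proof
  assume "i \<in> GD_tree t"
  then obtain s r where i: "1 \<le> i" "i \<le> deg t - 1" and sr: "wf_ptree s" "wf_ptree r" "t = graft s r" "deg s = i"
    unfolding GD_tree_def by auto
  moreover have "r \<noteq> Leaf" using i sr by auto
  ultimately show "0 < i \<and> (\<exists>s r. wf_ptree s \<and> wf_ptree r \<and> r \<noteq> Leaf \<and> t = graft s r \<and> deg s = i)"
    by auto
next
  assume "0 < i \<and> (\<exists>s r. wf_ptree s \<and> wf_ptree r \<and> r \<noteq> Leaf \<and> t = graft s r \<and> deg s = i)"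
  then obtain s r where "0 < i" "wf_ptree s" "wf_ptree r" "r \<noteq> Leaf" "t = graft s r" "deg s = i"
    by blast
  moreover have "deg t = deg s + deg r" "0 < deg r"
    using calculation deg_graft deg_eq_0_iff by auto
  ultimately show "i \<in> GD_tree t"
    unfolding GD_tree_def by auto
qed

lemma mem_GD_tree_Node_Cons_iff:
  assumes wf: "wf_ptree (Node (c # cs))"
  shows "i \<in> GD_tree (Node (c # cs)) \<longleftrightarrow>
    0 < i \<and> (\<exists>s d. wf_ptree s \<and> wf_ptree d \<and> c = graft s d \<and> deg s = i)"
proof
  have wf_iff: "\<And>d. wf_ptree (Node (d # cs)) \<longleftrightarrow> wf_ptree d"
    using wf by auto
  assume "i \<in> GD_tree (Node (c # cs))"
  then obtain s r where "0 < i" "wf_ptree s" "wf_ptree r" "r \<noteq> Leaf"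
    "Node (c # cs) = graft s r" "deg s = i"
    unfolding mem_GD_tree_iff[OF wf] by blast
  moreover from this obtain d where "r = Node (d # cs)" "c = graft s d"
    using Node_Cons_eq_graft_iff by meson
  ultimately show "0 < i \<and> (\<exists>s d. wf_ptree s \<and> wf_ptree d \<and> c = graft s d \<and> deg s = i)"
    using wf_iff by blast
next
  assume "0 < i \<and> (\<exists>s d. wf_ptree s \<and> wf_ptree d \<and> c = graft s d \<and> deg s = i)"
  then obtain s d where "0 < i" "wf_ptree s" "wf_ptree (Node (d # cs))"
    "Node (c # cs) = graft s (Node (d # cs))" "deg s = i"
    using wf by auto
  then show "i \<in> GD_tree (Node (c # cs))"
    unfolding mem_GD_tree_iff[OF wf] by blast
qed

lemma GD_tree_Node_Cons:
  assumes wf: "wf_ptree (Node (c # cs))"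
  shows "GD_tree (Node (c # cs)) = GD_tree c \<union> (if c = Leaf then {} else {deg c})"
proof (intro set_eqI)
  fix i
  have wf_c: "wf_ptree c" using wf by simp
  have "i \<in> GD_tree (Node (c # cs)) \<longleftrightarrow> i \<in> GD_tree c \<or> (c \<noteq> Leaf \<and> i = deg c)"
    unfolding mem_GD_tree_Node_Cons_iff[OF wf]
  proof
    assume "0 < i \<and> (\<exists>s d. wf_ptree s \<and> wf_ptree d \<and> c = graft s d \<and> deg s = i)"
    then obtain s d where "0 < i" "wf_ptree s" "wf_ptree d" "c = graft s d" "deg s = i"
      by blast
    then show "i \<in> GD_tree c \<or> (c \<noteq> Leaf \<and> i = deg c)"
      unfolding mem_GD_tree_iff[OF wf_c] by (cases "d = Leaf") (auto simp: deg_def)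
  next
    assume "i \<in> GD_tree c \<or> (c \<noteq> Leaf \<and> i = deg c)"
    then show "0 < i \<and> (\<exists>s d. wf_ptree s \<and> wf_ptree d \<and> c = graft s d \<and> deg s = i)"
    proof
      assume "c \<noteq> Leaf \<and> i = deg c"
      moreover have "c = graft c Leaf" by simp
      ultimately show ?thesis
        using wf_c deg_eq_0_iff[OF wf_c] wf_ptree.simps(1) by blast
    qed (auto simp: mem_GD_tree_iff[OF wf_c])
  qed
  then show "i \<in> GD_tree (Node (c # cs)) \<longleftrightarrow> i \<in> GD_tree c \<union> (if c = Leaf then {} else {deg c})"
    by auto
qed

section \<open>Words of 213-avoiding labelled trees\<close>

lemma set_word_subset_labels: "set (word u) \<subseteq> set (labels u)"
  by (induction u rule: word.induct) auto

lemma set_concat_Cons_word_subset: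
  "set (concat (map (\<lambda>d. m # word d) ds)) \<subseteq> insert m (set (concat (map labels ds)))"
  using set_word_subset_labels by (induction ds) auto

lemma length_word: "wf_ptree (erase u) \<Longrightarrow> length (word u) = deg (erase u)"
proof (induction u rule: word.induct)
  case (3 k c cs)
  have "length (concat (map (\<lambda>d. k # word d) cs)) = sum_list (map (\<lambda>d. leaves (erase d)) cs)"
    using 3 leaves_pos by (auto simp: length_concat comp_def deg_def intro!: arg_cong[where f = sum_list])
  then show ?case
    using 3 leaves_pos[of "erase c"] by (simp add: deg_def comp_def)
qed (simp_all add: deg_def)

lemma increasing_child_less:
  "increasing (LNode k cs) \<Longrightarrow> c \<in> set cs \<Longrightarrow> e \<in> set (labels c) \<Longrightarrow> k < e"
proof (induction c arbitrary: k cs)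
  case (LNode k' cs')
  then have "k < k'" by fastforce
  moreover have "k' \<le> e"
    using LNode.prems LNode.IH[of _ k' cs'] by (fastforce intro: less_imp_le)
  ultimately show ?case by simp
qed simp

lemma set_word_eq_labels: "wf_ptree (erase u) \<Longrightarrow> set (word u) = set (labels u)"
proof (induction u rule: word.induct)
  case (3 k c cs)
  then show ?case by (cases cs) auto
qed auto

lemma word_LNode_Cons:
  "cs \<noteq> [] \<Longrightarrow> word (LNode k (c # cs)) = word c @ k # word (LNode k cs)"
  by (cases cs) auto

lemma word_LNode_split_child:
  assumes "d \<in> set cs"
  obtains xs ys where "word (LNode k cs) = xs @ word d @ ys"
proof (cases cs)
  case (Cons c cs')
  show ?thesis
  proof (cases "d = c")
    case True
    then show ?thesis using that[of "[]"] Cons by simp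
  next
    case False
    then obtain as bs where "cs' = as @ d # bs" using assms Cons by (auto dest: split_list)
    then show ?thesis
      using that[of "word c @ concat (map (\<lambda>d. k # word d) as) @ [k]"] Cons by simp
  qed
qed (use assms in simp)

lemma avoids213_word_child:
  assumes "d \<in> set cs" "avoids213 (word (LNode k cs))"
  shows "avoids213 (word d)"
proof -
  obtain xs ys where "word (LNode k cs) = xs @ word d @ ys"
    using word_LNode_split_child[OF assms(1)] .
  then show ?thesis
    using assms(2) avoids213_appendD1 avoids213_appendD2 by metis
qed

lemma sorted_wrt_children_labels:
  assumes "\<forall>c\<in>set cs. wf_ptree (erase c)" "distinct (labels (LNode k cs))"
    "increasing (LNode k cs)" "avoids213 (word (LNode k cs))"
  shows "sorted_wrt (\<lambda>c d. \<forall>e\<in>set (labels c). \<forall>f\<in>set (labels d). f < e) cs"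
  using assms
proof (induction cs)
  case (Cons c cs)
  have avoids_cs: "avoids213 (word (LNode k cs))"
  proof (cases "cs = []")
    case False
    then have "avoids213 ((word c @ [k]) @ word (LNode k cs))"
      using Cons.prems(4) word_LNode_Cons by simp
    then show ?thesis by (rule avoids213_appendD2)
  qed (simp add: avoids213_Nil)
  have "\<forall>e\<in>set (labels c). \<forall>f\<in>set (labels d). f < e" if d: "d \<in> set cs" for d
  proof (intro ballI)
    fix e f assume e: "e \<in> set (labels c)" and f: "f \<in> set (labels d)"
    obtain xs ys where "word (LNode k cs) = xs @ word d @ ys"
      using word_LNode_split_child[OF d] .
    then have "f \<in> set (word (LNode k cs))"
      using Cons.prems(1) set_word_eq_labels d f by auto
    moreover have "e \<in> set (word c)"
      using Cons.prems(1) set_word_eq_labels e by auto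
    moreover have "k < e" using increasing_child_less[OF Cons.prems(3) _ e] by simp
    ultimately have "\<not> e < f"
      using avoids213_not_less Cons.prems(4) word_LNode_Cons[of cs k c] d by fastforce
    moreover have "e \<noteq> f" using Cons.prems(2) d e f by auto
    ultimately show "f < e" by simp
  qed
  then show ?case using Cons avoids_cs by auto
qed simp

lemma GD_word_word_eq_GD_tree:
  assumes "wf_ptree (erase u)" "distinct (labels u)" "increasing u" "avoids213 (word u)"
  shows "GD_word (word u) = GD_tree (erase u)"
  using assms
proof (induction u)
  case LLeaf
  then show ?case by (simp add: GD_word_def GD_tree_def deg_def)
next
  case (LNode k cs)
  obtain c cs' where cs: "cs = c # cs'" and "cs' \<noteq> []"
    using LNode.prems(1) by (cases cs; cases "tl cs") auto
  define W where "W = word (LNode k cs')"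
  have word_u: "word (LNode k cs) = word c @ k # W"
    using word_LNode_Cons cs \<open>cs' \<noteq> []\<close> unfolding W_def by blast
  have child: "wf_ptree (erase c)" "distinct (labels c)" "increasing c"
    using LNode.prems(1-3) cs by auto
  have GD_c: "GD_word (word c) = GD_tree (erase c)"
    using LNode.IH[of c] child LNode.prems(4) word_u cs avoids213_appendD1 by auto
  have c_gt: "\<forall>e\<in>set (word c). k < e"
    using set_word_subset_labels increasing_child_less[OF LNode.prems(3)] cs by fastforce
  have W_sub: "set W \<subseteq> insert k (set (concat (map labels cs')))"
    using set_word_subset_labels[of "LNode k cs'"] unfolding W_def by simp
  then have W_ge: "\<forall>f\<in>set W. k \<le> f"
    using increasing_child_less[OF LNode.prems(3)] cs by fastforce
  have "\<forall>e\<in>set (labels c). \<forall>f\<in>set (concat (map labels cs')). f < e"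
    using sorted_wrt_children_labels[of cs k] LNode.prems cs by auto
  then have c_gt_W: "\<forall>e\<in>set (word c). \<forall>f\<in>set W. f < e"
    using W_sub c_gt set_word_subset_labels by fastforce
  have "GD_word (word (LNode k cs)) = GD_tree (erase c) \<union> (if word c = [] then {} else {length (word c)})"
    using GD_word_append_Cons[OF c_gt c_gt_W W_ge] word_u GD_c by simp
  also have "\<dots> = GD_tree (erase (LNode k cs))"
    using GD_tree_Node_Cons[of "erase c" "map erase cs'"] LNode.prems(1) cs
      length_word[OF child(1)] deg_eq_0_iff[OF child(1)] by auto
  finally show ?case .
qed

section \<open>The 213-avoiding GSP of a planar tree\<close>

fun internal_nodes :: "ptree \<Rightarrow> nat" where
  "internal_nodes Leaf = 0"
| "internal_nodes (Node cs) = Suc (sum_list (map internal_nodes cs))"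

fun rlabels :: "ltree \<Rightarrow> nat list" where
  "rlabels LLeaf = []"
| "rlabels (LNode k cs) = k # concat (map rlabels (rev cs))"

lemma set_rlabels: "set (rlabels u) = set (labels u)"
  by (induction u) auto

lemma length_rlabels: "length (rlabels u) = internal_nodes (erase u)"
proof (induction u)
  case (LNode k cs)
  then show ?case
    by (simp add: length_concat comp_def rev_map[symmetric] cong: map_cong)
qed simp

lemma length_labels: "length (labels u) = internal_nodes (erase u)"
proof (induction u)
  case (LNode k cs)
  then show ?case
    by (simp add: length_concat comp_def cong: map_cong)
qed simp

lemma sorted_wrt_concat:
  "sorted_wrt P (concat xss) \<longleftrightarrow>
     (\<forall>xs\<in>set xss. sorted_wrt P xs) \<and> sorted_wrt (\<lambda>xs ys. \<forall>x\<in>set xs. \<forall>y\<in>set ys. P x y) xss"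
  by (induction xss) (auto simp: sorted_wrt_append)

lemma sorted_rlabels:
  assumes "wf_ptree (erase u)" "distinct (labels u)" "increasing u" "avoids213 (word u)"
  shows "sorted_wrt (<) (rlabels u)"
  using assms
proof (induction u)
  case (LNode k cs)
  have "sorted_wrt (\<lambda>c d. \<forall>e\<in>set (labels c). \<forall>f\<in>set (labels d). f < e) cs"
    using sorted_wrt_children_labels LNode.prems by auto
  then have "sorted_wrt (\<lambda>xs ys. \<forall>x\<in>set xs. \<forall>y\<in>set ys. x < y) (map rlabels (rev cs))"
    by (auto simp: sorted_wrt_map sorted_wrt_rev set_rlabels elim!: sorted_wrt_mono_rel[rotated])
  moreover have "sorted_wrt (<) (rlabels c)" if "c \<in> set cs" for c
    using LNode.IH[OF that] LNode.prems avoids213_word_child[OF that] that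
    by (auto simp: distinct_concat_iff)
  moreover have "k < e" if "e \<in> set (rlabels c)" "c \<in> set cs" for c e
    using increasing_child_less[OF LNode.prems(3)] that set_rlabels by blast
  ultimately show ?case
    by (auto simp: sorted_wrt_concat)
qed simp

lemma ltree_eqI: "erase u = erase v \<Longrightarrow> rlabels u = rlabels v \<Longrightarrow> u = v"
proof (induction u arbitrary: v)
  case LLeaf
  then show ?case by (cases v) auto
next
  case (LNode k cs)
  then obtain ds where v: "v = LNode k ds" and erase_eq: "map erase cs = map erase ds"
    and concat_eq: "concat (map rlabels (rev cs)) = concat (map rlabels (rev ds))"
    by (cases v) auto
  have len: "length cs = length ds" using erase_eq by (rule map_eq_imp_length_eq)
  have erase_nth: "erase (cs ! i) = erase (ds ! i)" if "i < length cs" for i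
    using erase_eq that by (metis len nth_map)
  have "map rlabels (rev cs) = map rlabels (rev ds)"
  proof (subst concat_eq_concat_iff[symmetric])
    show "\<forall>(x, y)\<in>set (zip (map rlabels (rev cs)) (map rlabels (rev ds))). length x = length y"
      using len erase_nth by (auto simp: set_zip length_rlabels rev_nth)
  qed (use len concat_eq in simp_all)
  then have rlabels_nth: "rlabels (cs ! i) = rlabels (ds ! i)" if "i < length cs" for i
    using that len by (metis nth_map rev_map rev_swap)
  have "cs = ds"
    using len erase_nth rlabels_nth LNode.IH by (intro nth_equalityI) auto
  then show ?case using v by simp
qed

lemma rlabels_eq_upt:
  assumes "gsp u" "avoids213 (word u)"
  shows "rlabels u = [1..<Suc (internal_nodes (erase u))]"
proof (rule strict_sorted_equal)
  show "sorted_wrt (<) (rlabels u)"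
    using assms sorted_rlabels unfolding gsp_def by blast
  show "set (rlabels u) = set [1..<Suc (internal_nodes (erase u))]"
    using assms length_labels set_rlabels unfolding gsp_def by auto
qed (rule sorted_wrt_upt)

lemma gsp_avoiding_unique:
  assumes "gsp u" "avoids213 (word u)" "gsp v" "avoids213 (word v)" "erase u = erase v"
  shows "u = v"
  using assms rlabels_eq_upt by (metis ltree_eqI)

fun label_from :: "nat \<Rightarrow> ptree \<Rightarrow> ltree"
  and label_from_list :: "nat \<Rightarrow> ptree list \<Rightarrow> ltree list" where
  "label_from b Leaf = LLeaf"
| "label_from b (Node cs) = LNode b (label_from_list (Suc b) cs)"
| "label_from_list b [] = []"
| "label_from_list b (c # cs) =
     label_from (b + sum_list (map internal_nodes cs)) c # label_from_list b cs"

lemma erase_label_from: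
  "erase (label_from b t) = t"
  "map erase (label_from_list b cs) = cs"
  by (induction b t and b cs rule: label_from_label_from_list.induct) auto

lemma rlabels_label_from:
  "rlabels (label_from b t) = [b..<b + internal_nodes t]"
  "concat (map rlabels (rev (label_from_list b cs))) = [b..<b + sum_list (map internal_nodes cs)]"
proof (induction b t and b cs rule: label_from_label_from_list.induct)
  case (2 b cs)
  then show ?case by (simp del: upt_Suc add: upt_conv_Cons)
next
  case (4 b c cs)
  have "[b..<b + sum_list (map internal_nodes (c # cs))] =
      [b..<b + sum_list (map internal_nodes cs)] @
      [b + sum_list (map internal_nodes cs)..<b + sum_list (map internal_nodes cs) + internal_nodes c]"
    using upt_add_eq_append[of b "b + sum_list (map internal_nodes cs)" "internal_nodes c"]
    by (simp add: add.commute add.left_commute)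
  then show ?case using 4 by simp
qed simp_all

lemma set_labels_label_from:
  "set (labels (label_from b t)) = {b..<b + internal_nodes t}"
  "set (concat (map labels (label_from_list b cs))) = {b..<b + sum_list (map internal_nodes cs)}"
proof -
  show "set (labels (label_from b t)) = {b..<b + internal_nodes t}"
    using rlabels_label_from(1)[of b t] set_rlabels[of "label_from b t"] by simp
  have "set (concat (map labels us)) = set (concat (map rlabels (rev us)))" for us
    by (simp add: set_rlabels)
  then show "set (concat (map labels (label_from_list b cs))) = {b..<b + sum_list (map internal_nodes cs)}"
    by (simp only: rlabels_label_from(2) set_upt)
qed

lemma distinct_labels_label_from: "distinct (labels (label_from b t))"
proof -
  have "card (set (labels (label_from b t))) = length (labels (label_from b t))"
    using set_labels_label_from(1) length_labels erase_label_from(1) by simp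
  then show ?thesis by (rule card_distinct)
qed

lemma increasing_label_from:
  "increasing (label_from b t)"
  "\<forall>c\<in>set (label_from_list b cs). increasing c"
proof (induction b t and b cs rule: label_from_label_from_list.induct)
  case (2 b cs)
  have "b < k" if "LNode k ds \<in> set (label_from_list (Suc b) cs)" for k ds
  proof -
    have "k \<in> set (concat (map labels (label_from_list (Suc b) cs)))"
      using that by force
    then show ?thesis unfolding set_labels_label_from(2) by simp
  qed
  then show ?case
    using 2 by (simp split: ltree.split) blast
qed simp_all

lemma avoids213_label_from:
  "avoids213 (word (label_from b t))"
  "\<forall>m<b. avoids213 (concat (map (\<lambda>d. m # word d) (label_from_list b cs)))"
proof (induction b t and b cs rule: label_from_label_from_list.induct)
  case (2 b cs)
  show ?case
  proof (cases "label_from_list (Suc b) cs")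
    case (Cons c ds)
    then have "avoids213 ([b] @ word c @ concat (map (\<lambda>d. b # word d) ds))"
      using 2 by simp
    then show ?thesis
      using Cons by (simp add: avoids213_appendD2[of "[b]"])
  qed (simp add: avoids213_Nil)
next
  case (4 b c cs)
  show ?case
  proof (intro allI impI)
    fix m assume m: "m < b"
    define S where "S = sum_list (map internal_nodes cs)"
    define X where "X = word (label_from (b + S) c)"
    define Y where "Y = concat (map (\<lambda>d. m # word d) (label_from_list b cs))"
    have set_Y: "set Y \<subseteq> insert m {b..<b + S}"
      using set_concat_Cons_word_subset[of m "label_from_list b cs"] set_labels_label_from(2)[of b cs]
      unfolding Y_def S_def by auto
    have set_X: "set X \<subseteq> {b + S..}"
      using set_word_subset_labels set_labels_label_from(1)[of "b + S" c] unfolding X_def by fastforce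
    have "\<forall>e\<in>set X. \<forall>f\<in>set Y. f < e"
    proof (intro ballI)
      fix e f assume "e \<in> set X" "f \<in> set Y"
      then have "b + S \<le> e" "f = m \<or> f < b + S" using set_X set_Y by auto
      then show "f < e" using m by auto
    qed
    moreover have "avoids213 X" "avoids213 Y"
      using 4 m unfolding S_def X_def Y_def by auto
    ultimately have "avoids213 (X @ Y)"
      by (intro avoids213_append)
    moreover have "\<forall>f\<in>set (X @ Y). m \<le> f"
      using set_X set_Y m by fastforce
    ultimately have "avoids213 (m # X @ Y)"
      by (rule avoids213_Cons)
    then show "avoids213 (concat (map (\<lambda>d. m # word d) (label_from_list b (c # cs))))"
      unfolding X_def Y_def S_def by simp
  qed
qed (simp_all add: avoids213_Nil)

lemma gsp_label_from: "wf_ptree t \<Longrightarrow> gsp (label_from 1 t)"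
  unfolding gsp_def
  using erase_label_from(1) distinct_labels_label_from increasing_label_from(1)
    set_labels_label_from(1) length_labels[of "label_from 1 t"]
  by (simp add: atLeastLessThanSuc_atLeastAtMost)

lemma iota_spec:
  assumes "wf_ptree t"
  shows "gsp (iota t) \<and> erase (iota t) = t \<and> avoids213 (word (iota t))"
proof -
  have witness: "gsp (label_from 1 t) \<and> erase (label_from 1 t) = t \<and> avoids213 (word (label_from 1 t))"
    using gsp_label_from[OF assms] erase_label_from(1) avoids213_label_from(1) by blast
  show ?thesis
    unfolding iota_def
  proof (rule theI[where P = "\<lambda>u. gsp u \<and> erase u = t \<and> avoids213 (word u)"])
    fix u assume "gsp u \<and> erase u = t \<and> avoids213 (word u)"
    then show "u = label_from 1 t"
      using witness gsp_avoiding_unique by metis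
  qed (rule witness)
qed

theorem mainTheorem11:
  assumes "wf_ptree t"
  shows "GD_tree t = GD_word (word (iota t))"
proof -
  have "gsp (iota t)" "erase (iota t) = t" "avoids213 (word (iota t))"
    using iota_spec[OF assms] by auto
  then show ?thesis
    using GD_word_word_eq_GD_tree[of "iota t"] unfolding gsp_def by simp
qed

end
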